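(* Let $P$ be the uniform probability measure on $[0,1]$ and $Q$ a probability measure on $[0,1]$ with density $q$, so $r = dQ/dP = q$. Assume $r$ is unimodal with maximiser $x^*$ and $r_{max} = r(x^* ) = \sup r < \infty$. Then the width function $w$ is non-increasing in $\gamma$ and satisfies $$\int_0^1 w(\gamma)\,d\gamma = \frac{1}{r_{max}} \quad\text{and}\quad w(0) \ge \frac{1}{r_{max}}.$$
   Context: Unimodal: $r$ non-decreasing on $[0,x^*]$ and non-increasing on $[x^*,1]$. For $\gamma\in[0,1]$, the superlevel set is $S(\gamma) = \{x\in[0,1] : r(x) \ge \gamma r_{max}\}$ and the width function is $w(\gamma) = \inf\{\delta\in[0,1] : \exists z\in[0,1],\ S(\gamma)\subseteq[z,z+\delta]\}$. *)

theory Defs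
  imports "HOL-Analysis.Analysis"
begin

definition superlevel :: "(real \<Rightarrow> real) \<Rightarrow> real \<Rightarrow> real \<Rightarrow> real set" where
  "superlevel r rmax \<gamma> = {x \<in> {0..1}. r x \<ge> \<gamma> * rmax}"

definition width :: "(real \<Rightarrow> real) \<Rightarrow> real \<Rightarrow> real \<Rightarrow> real" where
  "width r rmax \<gamma> = Inf {\<delta> \<in> {0..1}. \<exists>z \<in> {0..1}. superlevel r rmax \<gamma> \<subseteq> {z..z+\<delta>}}"

end

theory Submission
  imports Defs
begin

text \<open>Unimodality makes every superlevel set S(\<gamma>) an interval containing the peak, so its width
  equals its Lebesgue measure, and S(\<gamma>) shrinks as \<gamma> grows. By the layer-cake formula the
  integral over \<gamma> \<in> [0,1] of the measures of the superlevel sets of r / rmax is the integral of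
  r / rmax, i.e. 1 / rmax. Finally S(0) = [0,1] has width 1, and rmax \<ge> 1 because r is a
  probability density bounded by rmax.\<close>

lemma emeasure_lborel_interval:
  fixes S :: "real set"
  assumes "is_interval S" "bounded S" "S \<noteq> {}"
  shows "emeasure lborel S = ennreal (Sup S - Inf S)"
proof (rule antisym)
  have bdd: "bdd_below S" "bdd_above S"
    using assms(2) by (auto intro: bounded_imp_bdd_below bounded_imp_bdd_above)
  have "{Inf S<..<Sup S} \<subseteq> S"
  proof
    fix y assume "y \<in> {Inf S<..<Sup S}"
    then have "Inf S < y" "y < Sup S" by auto
    then obtain x z where "x \<in> S" "z \<in> S" "x < y" "y < z"
      using cInf_less_iff[OF \<open>S \<noteq> {}\<close> bdd(1)] less_cSup_iff[OF \<open>S \<noteq> {}\<close> bdd(2)]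
      by blast
    then show "y \<in> S" using \<open>is_interval S\<close> unfolding is_interval_1 by (meson less_imp_le)
  qed
  then have "emeasure lborel {Inf S<..<Sup S} \<le> emeasure lborel S"
    using real_interval_borel_measurable[OF \<open>is_interval S\<close>] by (intro emeasure_mono) auto
  moreover have "Inf S \<le> Sup S" by (rule cInf_le_cSup[OF \<open>S \<noteq> {}\<close> bdd(2,1)])
  ultimately show "ennreal (Sup S - Inf S) \<le> emeasure lborel S" by simp
  have "S \<subseteq> {Inf S..Sup S}" using bdd by (auto intro: cInf_lower cSup_upper)
  then have "emeasure lborel S \<le> emeasure lborel {Inf S..Sup S}" by (intro emeasure_mono) auto
  then show "emeasure lborel S \<le> ennreal (Sup S - Inf S)" using \<open>Inf S \<le> Sup S\<close> by simp
qed

lemma set_nn_integral_layer_cake: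
  fixes g :: "real \<Rightarrow> real"
  assumes [measurable]: "g \<in> borel_measurable borel" "\<Omega> \<in> sets borel"
    and range: "\<And>x. x \<in> \<Omega> \<Longrightarrow> g x \<in> {0..1}"
  shows "(\<integral>\<^sup>+\<gamma>\<in>{0..1}. emeasure lborel {x \<in> \<Omega>. \<gamma> \<le> g x} \<partial>lborel) = (\<integral>\<^sup>+x\<in>\<Omega>. ennreal (g x) \<partial>lborel)"
proof -
  define A where "A = {p :: real \<times> real. fst p \<in> {0..1} \<and> snd p \<in> \<Omega> \<and> fst p \<le> g (snd p)}"
  have "A = {p \<in> space (lborel \<Otimes>\<^sub>M lborel). fst p \<in> {0..1} \<and> snd p \<in> \<Omega> \<and> fst p \<le> g (snd p)}"
    by (simp add: A_def space_pair_measure)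
  also have "\<dots> \<in> sets (lborel \<Otimes>\<^sub>M lborel)" by measurable
  finally have A: "A \<in> sets (lborel \<Otimes>\<^sub>M lborel)" .
  have slice_x: "(\<integral>\<^sup>+x. indicator A (\<gamma>, x) \<partial>lborel)
      = emeasure lborel {x \<in> \<Omega>. \<gamma> \<le> g x} * indicator {0..1} \<gamma>" for \<gamma>
  proof -
    have "(\<lambda>x. indicator A (\<gamma>, x) :: ennreal) = (\<lambda>x. indicator {x \<in> \<Omega>. \<gamma> \<le> g x} x * indicator {0..1} \<gamma>)"
      by (auto simp: A_def indicator_def fun_eq_iff)
    then show ?thesis by (simp add: nn_integral_multc)
  qed
  have slice_\<gamma>: "(\<integral>\<^sup>+\<gamma>. indicator A (\<gamma>, x) \<partial>lborel) = ennreal (g x) * indicator \<Omega> x" for x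
  proof (cases "x \<in> \<Omega>")
    case True
    then have "(\<lambda>\<gamma>. indicator A (\<gamma>, x) :: ennreal) = indicator {0..g x}"
      using range[of x] by (auto simp: A_def indicator_def fun_eq_iff)
    then show ?thesis using True range[of x] by simp
  next
    case False
    then have "(\<lambda>\<gamma>. indicator A (\<gamma>, x) :: ennreal) = (\<lambda>_. 0)"
      by (auto simp: A_def fun_eq_iff)
    then show ?thesis using False by simp
  qed
  have "(\<integral>\<^sup>+x. (\<integral>\<^sup>+\<gamma>. indicator A (\<gamma>, x) \<partial>lborel) \<partial>lborel)
      = (\<integral>\<^sup>+\<gamma>. (\<integral>\<^sup>+x. indicator A (\<gamma>, x) \<partial>lborel) \<partial>lborel)"
    by (rule lborel_pair.Fubini') (simp add: borel_measurable_indicator[OF A])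
  then show ?thesis by (simp add: slice_x slice_\<gamma>)
qed

lemma has_integral_of_set_nn_integral:
  fixes f :: "'a::euclidean_space \<Rightarrow> real"
  assumes "f integrable_on \<Omega>" "\<And>x. x \<in> \<Omega> \<Longrightarrow> 0 \<le> f x"
    and "(\<integral>\<^sup>+x\<in>\<Omega>. ennreal (f x) \<partial>lborel) = ennreal I" "0 \<le> I"
  shows "(f has_integral I) \<Omega>"
proof -
  have "ennreal (integral \<Omega> f) = ennreal I"
    using nn_integral_has_integral_lebesgue'[OF assms(2) integrable_integral[OF assms(1)]] assms(3)
    by simp
  moreover have "0 \<le> integral \<Omega> f" using assms(1,2) by (rule integral_nonneg)
  ultimately show ?thesis using assms(1,4) by (simp add: has_integral_integral)
qed

lemma superlevel_subset_unit: "superlevel r rmax \<gamma> \<subseteq> {0..1}"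
  by (auto simp: superlevel_def)

lemma superlevel_antimono:
  assumes "0 \<le> rmax" "\<alpha> \<le> \<beta>"
  shows "superlevel r rmax \<beta> \<subseteq> superlevel r rmax \<alpha>"
  using assms by (auto simp: superlevel_def) (meson mult_right_mono order_trans)

lemma superlevel_zero:
  assumes "\<And>x. x \<in> {0..1} \<Longrightarrow> r x \<ge> 0"
  shows "superlevel r rmax 0 = {0..1}"
  using assms by (auto simp: superlevel_def)

lemma Inf_enclosing_lengths:
  fixes S :: "real set"
  assumes S01: "S \<subseteq> {0..1}" and "S \<noteq> {}"
  shows "Inf {\<delta> \<in> {0..1}. \<exists>z \<in> {0..1}. S \<subseteq> {z..z+\<delta>}} = Sup S - Inf S"
proof (rule cInf_eq_minimum)
  have bdd: "bdd_below S" "bdd_above S"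
    using S01 bdd_below_mono bdd_above_mono by (metis bdd_below_Icc bdd_above_Icc)+
  then have "S \<subseteq> {Inf S..Sup S}"
    by (auto intro: cInf_lower cSup_upper)
  moreover have "0 \<le> Inf S" "Sup S \<le> 1" "Inf S \<le> Sup S"
    using S01 \<open>S \<noteq> {}\<close> bdd by (auto intro!: cInf_greatest cSup_least cInf_le_cSup)
  ultimately show "Sup S - Inf S \<in> {\<delta> \<in> {0..1}. \<exists>z \<in> {0..1}. S \<subseteq> {z..z+\<delta>}}"
    by (auto intro!: bexI[of _ "Inf S"])
next
  fix \<delta> assume "\<delta> \<in> {\<delta> \<in> {0..1}. \<exists>z \<in> {0..1}. S \<subseteq> {z..z+\<delta>}}"
  then obtain z where "S \<subseteq> {z..z+\<delta>}" by auto
  then have "z \<le> Inf S" "Sup S \<le> z + \<delta>"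
    using \<open>S \<noteq> {}\<close> by (auto intro!: cInf_greatest cSup_least)
  then show "Sup S - Inf S \<le> \<delta>" by simp
qed

lemma width_eq_Sup_minus_Inf:
  assumes "superlevel r rmax \<gamma> \<noteq> {}"
  shows "width r rmax \<gamma> = Sup (superlevel r rmax \<gamma>) - Inf (superlevel r rmax \<gamma>)"
  unfolding width_def using Inf_enclosing_lengths[OF superlevel_subset_unit assms] .

lemma one_mem_enclosing_lengths:
  "1 \<in> {\<delta> \<in> {0..1}. \<exists>z \<in> {0..1}. superlevel r rmax \<gamma> \<subseteq> {z..z+\<delta>}}"
  by (auto simp: superlevel_def intro!: bexI[of _ 0])

lemma width_nonneg: "0 \<le> width r rmax \<gamma>"
  unfolding width_def using one_mem_enclosing_lengths by (intro cInf_greatest) auto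

lemma width_antimono:
  assumes "0 \<le> rmax"
  shows "antimono (width r rmax)"
proof (rule antimonoI)
  fix \<alpha> \<beta> :: real assume "\<alpha> \<le> \<beta>"
  then have "superlevel r rmax \<beta> \<subseteq> superlevel r rmax \<alpha>"
    by (rule superlevel_antimono[OF assms])
  then have "{\<delta> \<in> {0..1}. \<exists>z \<in> {0..1}. superlevel r rmax \<alpha> \<subseteq> {z..z+\<delta>}}
      \<subseteq> {\<delta> \<in> {0..1}. \<exists>z \<in> {0..1}. superlevel r rmax \<beta> \<subseteq> {z..z+\<delta>}}"
    by blast
  then show "width r rmax \<beta> \<le> width r rmax \<alpha>"
    unfolding width_def using one_mem_enclosing_lengths
    by (intro cInf_superset_mono) (auto intro: bdd_belowI[of _ 0])
qed

lemma unimodal_le_peak: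
  fixes r :: "real \<Rightarrow> real"
  assumes "mono_on {0..xs} r" "antimono_on {xs..1} r" "x \<in> {0..1}"
  shows "r x \<le> r xs"
proof (cases "x \<le> xs")
  case True
  then show ?thesis using assms by (intro monotone_onD[OF assms(1)]) auto
next
  case False
  then show ?thesis using assms by (intro monotone_onD[OF assms(2)]) auto
qed

lemma is_interval_superlevel_unimodal:
  assumes incr: "mono_on {0..xs} r" and decr: "antimono_on {xs..1} r"
  shows "is_interval (superlevel r rmax \<gamma>)"
  unfolding is_interval_1
proof (intro ballI allI impI)
  fix x z y assume x: "x \<in> superlevel r rmax \<gamma>" and z: "z \<in> superlevel r rmax \<gamma>"
    and "x \<le> y \<and> y \<le> z"
  have "min (r x) (r z) \<le> r y"
  proof (cases "y \<le> xs")
    case True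
    then have "r x \<le> r y"
      using x \<open>x \<le> y \<and> y \<le> z\<close> by (intro monotone_onD[OF incr]) (auto simp: superlevel_def)
    then show ?thesis by simp
  next
    case False
    then have "r z \<le> r y"
      using z \<open>x \<le> y \<and> y \<le> z\<close> by (intro monotone_onD[OF decr]) (auto simp: superlevel_def)
    then show ?thesis by simp
  qed
  then show "y \<in> superlevel r rmax \<gamma>"
    using x z \<open>x \<le> y \<and> y \<le> z\<close> by (auto simp: superlevel_def)
qed

lemma borel_measurable_unimodal:
  fixes r :: "real \<Rightarrow> real"
  assumes "xs \<in> {0..1}" and incr: "mono_on {0..xs} r" and decr: "antimono_on {xs..1} r"
  shows "(\<lambda>x. indicator {0..1} x * r x) \<in> borel_measurable borel"
proof -
  have "mono_on {xs<..1} (\<lambda>x. - r x)"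
    using decr by (auto simp: monotone_on_def)
  then have "(\<lambda>x. - (- r x)) \<in> borel_measurable (restrict_space borel {xs<..1})"
    by (intro borel_measurable_uminus borel_measurable_mono_on_fnc)
  then have "(\<lambda>x. indicator {xs<..1} x *\<^sub>R r x) \<in> borel_measurable borel"
    by (simp add: borel_measurable_restrict_space_iff)
  moreover have "(\<lambda>x. indicator {0..xs} x *\<^sub>R r x) \<in> borel_measurable borel"
    using borel_measurable_mono_on_fnc[OF incr] by (simp add: borel_measurable_restrict_space_iff)
  moreover have "(\<lambda>x. indicator {0..1} x * r x)
      = (\<lambda>x. indicator {0..xs} x *\<^sub>R r x + indicator {xs<..1} x *\<^sub>R r x)"
    using assms(1) by (auto simp: indicator_def fun_eq_iff)
  ultimately show ?thesis by simp
qed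

lemma unimodal_density_peak_ge_one:
  fixes r :: "real \<Rightarrow> real"
  assumes "(r has_integral 1) {0..1}" "mono_on {0..xs} r" "antimono_on {xs..1} r"
  shows "1 \<le> r xs"
proof -
  have "((\<lambda>x. r xs) has_integral r xs) {0..1::real}"
    using has_integral_const_real[of "r xs" 0 "1::real"] by simp
  then show ?thesis
    using has_integral_le[OF assms(1)] unimodal_le_peak[OF assms(2,3)] by blast
qed

lemma emeasure_superlevel_eq_width:
  fixes r :: "real \<Rightarrow> real"
  assumes "xs \<in> {0..1}" "mono_on {0..xs} r" "antimono_on {xs..1} r" "0 \<le> r xs" "\<gamma> \<le> 1"
  shows "emeasure lborel (superlevel r (r xs) \<gamma>) = ennreal (width r (r xs) \<gamma>)"
proof -
  have "\<gamma> * r xs \<le> r xs"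
    using mult_right_mono[OF assms(5,4)] by simp
  then have "xs \<in> superlevel r (r xs) \<gamma>"
    using assms(1) by (simp add: superlevel_def)
  moreover have "bounded (superlevel r (r xs) \<gamma>)"
    using bounded_subset[OF compact_imp_bounded[OF compact_Icc] superlevel_subset_unit] .
  ultimately show ?thesis
    using emeasure_lborel_interval is_interval_superlevel_unimodal[OF assms(2,3)]
      width_eq_Sup_minus_Inf by (metis empty_iff)
qed

lemma width_has_integral_unimodal:
  fixes r :: "real \<Rightarrow> real"
  assumes nonneg: "\<And>x. x \<in> {0..1} \<Longrightarrow> r x \<ge> 0"
    and density: "(r has_integral 1) {0..1}"
    and xs_in: "xs \<in> {0..1}" and incr: "mono_on {0..xs} r" and decr: "antimono_on {xs..1} r"
  shows "(width r (r xs) has_integral 1 / r xs) {0..1}"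
proof -
  define R where "R = r xs"
  have "1 \<le> R" unfolding R_def using density incr decr by (rule unimodal_density_peak_ge_one)
  define g where "g x = indicator {0..1} x * r x / R" for x
  have "g \<in> borel_measurable borel"
    unfolding g_def using borel_measurable_unimodal[OF xs_in incr decr] by simp
  moreover have "g x \<in> {0..1}" if "x \<in> {0..1}" for x
    using that nonneg unimodal_le_peak[OF incr decr] \<open>1 \<le> R\<close> by (simp add: g_def R_def)
  moreover have "superlevel r R \<gamma> = {x \<in> {0..1}. \<gamma> \<le> g x}" for \<gamma>
    using \<open>1 \<le> R\<close> by (auto simp: superlevel_def g_def pos_le_divide_eq)
  ultimately have layer_cake: "(\<integral>\<^sup>+\<gamma>\<in>{0..1}. emeasure lborel (superlevel r R \<gamma>) \<partial>lborel)
      = (\<integral>\<^sup>+x\<in>{0..1}. ennreal (g x) \<partial>lborel)"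
    using set_nn_integral_layer_cake[of g "{0..1}"] by simp
  have "(\<integral>\<^sup>+\<gamma>\<in>{0..1}. ennreal (width r R \<gamma>) \<partial>lborel)
      = (\<integral>\<^sup>+\<gamma>\<in>{0..1}. emeasure lborel (superlevel r R \<gamma>) \<partial>lborel)"
    using xs_in incr decr \<open>1 \<le> R\<close>
    by (intro set_nn_integral_cong) (auto simp: R_def emeasure_superlevel_eq_width)
  also have "\<dots> = (\<integral>\<^sup>+x\<in>{0..1}. ennreal (r x / R) \<partial>lborel)"
    unfolding layer_cake by (intro set_nn_integral_cong) (auto simp: g_def)
  also have "\<dots> = ennreal (1 / R)"
    using has_integral_cmul[OF density, of "1 / R"] nonneg \<open>1 \<le> R\<close>
    by (intro nn_integral_has_integral_lebesgue') auto
  finally have nn_integral: "(\<integral>\<^sup>+\<gamma>\<in>{0..1}. ennreal (width r R \<gamma>) \<partial>lborel) = ennreal (1 / R)" .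
  have "mono_on {0..1} (\<lambda>\<gamma>. - width r R \<gamma>)"
    using width_antimono[of R r] \<open>1 \<le> R\<close> by (auto simp: monotone_on_def)
  then have "(\<lambda>\<gamma>. - (- width r R \<gamma>)) integrable_on {0..1}"
    by (intro integrable_neg integrable_on_mono_on)
  then show ?thesis
    using nn_integral \<open>1 \<le> R\<close> width_nonneg unfolding R_def
    by (intro has_integral_of_set_nn_integral) auto
qed

theorem mainTheorem3:
  fixes r :: "real \<Rightarrow> real" and xs :: real
  assumes nonneg: "\<And>x. x \<in> {0..1} \<Longrightarrow> r x \<ge> 0"
    and density: "(r has_integral 1) {0..1}"
    and xs_in: "xs \<in> {0..1}"
    and incr: "mono_on {0..xs} r"
    and decr: "antimono_on {xs..1} r"
    and rmax: "r xs = (SUP x\<in>{0..1}. r x)"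
  shows "antimono_on {0..1} (width r (r xs)) \<and>
         (width r (r xs) has_integral 1 / r xs) {0..1} \<and>
         width r (r xs) 0 \<ge> 1 / r xs"
proof -
  have peak: "1 \<le> r xs" using density incr decr by (rule unimodal_density_peak_ge_one)
  then have "antimono_on {0..1} (width r (r xs))"
    by (intro monotone_on_subset[OF width_antimono subset_UNIV]) simp
  moreover have "(width r (r xs) has_integral 1 / r xs) {0..1}"
    using nonneg density xs_in incr decr by (rule width_has_integral_unimodal)
  moreover have "width r (r xs) 0 = 1"
    using width_eq_Sup_minus_Inf superlevel_zero[OF nonneg] by simp
  ultimately show ?thesis using peak by simp
qed

end
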